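(* Let $F\in\mathbb{R}[x,y,t,s]$ be square-free, with no factor depending only on $(t,s)$, and such that the leading coefficient $A_n(t,s)$ of $F$ with respect to $y$ does not depend on $x$. Let $M(x,t,s)=\sqrt{D_y(F)}$ and $R(t,s)=D_x(M)$, and assume $R$ is not identically zero. Let $t_0\in\mathbb{R}$ be such that $t-t_0$ is not a factor of $R(t,s)$. Then: (i) $A_n(t_0,s)\neq 0$; in particular $\deg_y F(x,y,t_0,s)=\deg_y F$; (ii) $\mathrm{Res}_y(F,F_y)$ specializes well at $t=t_0$, i.e. $\mathrm{Res}_y(F,F_y)(x,t_0,s)=\mathrm{Res}_y\big(F(x,y,t_0,s),F_y(x,y,t_0,s)\big)$, where $F_y=\partial F/\partial y$; (iii) $F(x,y,t_0,s)$ is square-free as a polynomial in the variables $x,y$ (it has no repeated factor of positive degree in $(x,y)$). The analogous statements hold for $s_0\in\mathbb{R}$ such that $s-s_0$ is not a factor of $R(t,s)$, with the specialization $s=s_0$.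
   Context: For a polynomial $G$ and a variable $w$, $D_w(G):=\mathrm{Res}_w(G,\partial G/\partial w)$, and $\sqrt{G}$ denotes the square-free part of $G$. By convention $M:=0$ if $\deg_y F=0$ and $R:=0$ if $\deg_x M=0$. *)

theory Defs
  imports "Subresultants.Resultant_Prelim" "HOL-Computational_Algebra.Computational_Algebra" "HOL-Computational_Algebra.Field_as_Ring"
begin

text \<open>Encoding of R[x,y,t,s]: nested univariate polynomials
  real poly poly poly poly, from outermost to innermost variable: y, x, s, t.
  Thus a value of type real poly poly poly is in R[x,s,t] (outer x, then s, inner t),
  and real poly poly is in R[s,t] (outer s, inner t).\<close>

type_synonym poly_ts = "real poly poly"
type_synonym poly_xts = "real poly poly poly"
type_synonym poly_yxts = "real poly poly poly poly"

text \<open>D_w(G) = Res_w(G, dG/dw), w the outermost variable.\<close>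
definition disc_res :: "'a::idom poly \<Rightarrow> 'a" where
  "disc_res G = resultant G (pderiv G)"

definition sqfree_part :: "'a::{factorial_semiring,normalization_semidom} \<Rightarrow> 'a" where
  "sqfree_part G = (if G = 0 then 0 else \<Prod>(prime_factors G))"

definition M_of :: "poly_yxts \<Rightarrow> poly_xts" where
  "M_of F = (if degree F = 0 then 0 else sqfree_part (disc_res F))"

definition R_of :: "poly_yxts \<Rightarrow> poly_ts" where
  "R_of F = (let M = M_of F in if degree M = 0 then 0 else disc_res M)"

abbreviation lc_y :: "poly_yxts \<Rightarrow> poly_xts" where
  "lc_y F \<equiv> lead_coeff F"

definition spec_t_ts :: "real \<Rightarrow> poly_ts \<Rightarrow> real poly" where
  "spec_t_ts t0 p = map_poly (\<lambda>c. poly c t0) p"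
definition spec_t_xts :: "real \<Rightarrow> poly_xts \<Rightarrow> real poly poly" where
  "spec_t_xts t0 p = map_poly (spec_t_ts t0) p"
definition spec_t :: "real \<Rightarrow> poly_yxts \<Rightarrow> real poly poly poly" where
  "spec_t t0 F = map_poly (spec_t_xts t0) F"

definition spec_s_ts :: "real \<Rightarrow> poly_ts \<Rightarrow> real poly" where
  "spec_s_ts s0 p = poly p [:s0:]"
definition spec_s_xts :: "real \<Rightarrow> poly_xts \<Rightarrow> real poly poly" where
  "spec_s_xts s0 p = map_poly (spec_s_ts s0) p"
definition spec_s :: "real \<Rightarrow> poly_yxts \<Rightarrow> real poly poly poly" where
  "spec_s s0 F = map_poly (spec_s_xts s0) F"

text \<open>t - t0 and s - s0 as elements of R[t,s].\<close>
definition t_lin :: "real \<Rightarrow> poly_ts" where "t_lin t0 = [:[:-t0, 1:]:]"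
definition s_lin :: "real \<Rightarrow> poly_ts" where "s_lin s0 = [:[:-s0:], 1:]"

definition sqfree_xy :: "real poly poly poly \<Rightarrow> bool" where
  "sqfree_xy G \<longleftrightarrow> (\<forall>H. H * H dvd G \<longrightarrow> degree H = 0 \<and> degree (coeff H 0) = 0)"

definition no_ts_factor :: "poly_yxts \<Rightarrow> bool" where
  "no_ts_factor F \<longleftrightarrow> \<not> (\<exists>g. g dvd F \<and> \<not> is_unit g \<and> degree g = 0 \<and> degree (coeff g 0) = 0)"

end

theory Submission
  imports Defs "Subresultants.Subresultant_Gcd"
begin

text \<open>Specializing t or s is a ring homomorphism R[t,s] \<rightarrow> R[s] (resp. R[t]) whose kernel is
  the prime ideal generated by the linear polynomial c. If D = D_y(F) lay in that ideal, the prime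
  c would divide D, hence its radical M = c M1, and then R = Res_x(M, c M1') = c^(deg M) Res_x(M, M1')
  would be divisible by c. Therefore D does not vanish under the
  specialization. The leading coefficient A_n divides D, so it does not vanish either; then the
  degree in y is preserved and the resultant commutes with the specialization. Finally the
  specialized discriminant is nonzero, so a square factor cannot have positive degree in y, and a
  square factor free of y divides A_n, which is free of x.\<close>

lemma lead_coeff_dvd_resultant_pderiv:
  fixes F :: "'a::{idom,ring_char_0} poly"
  assumes "degree F \<ge> 1"
  shows "lead_coeff F dvd resultant F (pderiv F)"
proof -
  define m where "m = degree F"
  define k where "k = degree (pderiv F)"
  have k: "k = m - 1" unfolding k_def m_def by (simp add: degree_pderiv)
  have lc_dvd_coeff: "lead_coeff F dvd coeff F j" if "j \<ge> m" for j
    using that by (cases "j = m") (auto simp: m_def coeff_eq_0)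
  have carrier: "sylvester_mat F (pderiv F) \<in> carrier_mat (m+k) (m+k)"
    unfolding m_def k_def by (rule sylvester_carrier_mat)
  have "resultant F (pderiv F) = (\<Sum>i<m+k. sylvester_mat F (pderiv F) $$ (i,0)
          * cofactor (sylvester_mat F (pderiv F)) i 0)"
    unfolding resultant_def using assms
    by (intro laplace_expansion_column[OF carrier]) (auto simp: m_def)
  also have "lead_coeff F dvd \<dots>"
  proof (rule dvd_sum, rule dvd_mult2)
    fix i assume i: "i \<in> {..<m+k}"
    have entry: "sylvester_mat F (pderiv F) $$ (i,0) =
      (if i < k then if i \<le> 0 \<and> 0 - i \<le> m then coeff F (m + i - 0) else 0
       else if i - k \<le> 0 \<and> 0 \<le> i then coeff (pderiv F) (i - 0) else 0)"
      using i assms unfolding m_def k_def by (intro sylvester_index_mat) auto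
    show "lead_coeff F dvd sylvester_mat F (pderiv F) $$ (i,0)"
      unfolding entry using k assms
      by (auto simp: coeff_pderiv intro!: lc_dvd_coeff dvd_mult m_def)
  qed
  finally show ?thesis .
qed

lemma const_dvd_imp_dvd_resultant_pderiv:
  fixes M :: "'a::idom poly"
  assumes "[:c:] dvd M" and "degree M > 0"
  shows "c dvd resultant M (pderiv M)"
proof -
  obtain M1 where M: "M = [:c:] * M1" using assms(1) by blast
  have "c \<noteq> 0" using assms(2) M by auto
  moreover have "pderiv M = smult c (pderiv M1)" unfolding M by (simp add: pderiv_smult)
  ultimately have "resultant M (pderiv M) = c ^ degree M * resultant M (pderiv M1)"
    by (simp add: resultant_smult_right)
  then show ?thesis using assms(2) by (simp add: dvd_power)
qed

lemma square_dvd_imp_dvd_pderiv: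
  fixes F G :: "'a::idom poly"
  assumes "G * G dvd F"
  shows "G dvd pderiv F"
proof -
  obtain Q where Q: "F = G * G * Q" using assms by blast
  have "pderiv F = G * (G * pderiv Q + Q * pderiv G + Q * pderiv G)"
    unfolding Q by (simp add: pderiv_mult algebra_simps)
  then show ?thesis by simp
qed

lemma resultant_pderiv_eq_0_if_square_dvd:
  fixes F G :: "'a::{semiring_gcd_mult_normalize,factorial_ring_gcd} poly"
  assumes "G * G dvd F" and "F \<noteq> 0" and "degree G \<noteq> 0"
  shows "resultant F (pderiv F) = 0"
proof -
  have "G dvd gcd F (pderiv F)"
    using assms(1) square_dvd_imp_dvd_pderiv dvd_mult_left by auto
  then have "degree G \<le> degree (gcd F (pderiv F))"
    using assms(2) by (intro dvd_imp_degree_le) auto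
  then show ?thesis using assms(3) by (subst resultant_0_gcd) auto
qed

lemma prime_elem_dvd_sqfree_part:
  assumes "prime_elem p" and "p dvd D" and "D \<noteq> 0"
  shows "p dvd sqfree_part D"
proof -
  have "normalize p \<in> prime_factors D"
    using assms by (simp add: in_prime_factors_iff)
  then have "normalize p dvd \<Prod>(prime_factors D)" by (intro dvd_prodI) auto
  then show ?thesis using assms(3) by (simp add: sqfree_part_def)
qed

lemma disc_res_map_poly:
  fixes \<phi> :: "'a::{idom,ring_char_0} \<Rightarrow> 'b::{idom,ring_char_0}"
  assumes "idom_hom \<phi>" and "\<phi> (lead_coeff F) \<noteq> 0"
  shows "degree (map_poly \<phi> F) = degree F"
    and "\<phi> (disc_res F) = resultant (map_poly \<phi> F) (map_poly \<phi> (pderiv F))"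
proof -
  interpret idom_hom \<phi> by fact
  show deg: "degree (map_poly \<phi> F) = degree F"
    using assms(2) by (intro degree_map_poly) auto
  have "degree (map_poly \<phi> (pderiv F)) = degree (pderiv F)"
    by (simp add: map_poly_pderiv degree_pderiv deg)
  with deg show "\<phi> (disc_res F) = resultant (map_poly \<phi> F) (map_poly \<phi> (pderiv F))"
    unfolding disc_res_def by (simp add: resultant_map_poly)
qed

lemma map_poly_mult_hom:
  assumes "idom_hom h"
  shows "map_poly h (p * q) = map_poly h p * map_poly h q"
proof -
  interpret map_poly_idom_hom h using assms by (rule map_poly_idom_hom.intro)
  show ?thesis by (rule hom_mult)
qed

locale principal_kernel_hom = idom_hom h for h :: "'a::idom \<Rightarrow> 'b::idom" +
  fixes lin :: 'a
  assumes lin_nonzero: "lin \<noteq> 0"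
    and kernel_iff_dvd: "h p = 0 \<longleftrightarrow> lin dvd p"
begin

lemma map_poly_eq_0_iff_const_dvd: "map_poly h q = 0 \<longleftrightarrow> [:lin:] dvd q"
  by (simp add: poly_eq_iff const_poly_dvd_iff kernel_iff_dvd)

lemma prime_elem_const: "prime_elem [:lin:]"
proof (rule prime_elemI)
  show "[:lin:] \<noteq> 0" using lin_nonzero by simp
  show "\<not> [:lin:] dvd 1"
    using map_poly_eq_0_iff_const_dvd[of 1] by auto
  fix a b :: "'a poly"
  assume "[:lin:] dvd a * b"
  moreover have "map_poly h (a * b) = map_poly h a * map_poly h b"
    using idom_hom_axioms by (rule map_poly_mult_hom)
  ultimately have "map_poly h a * map_poly h b = 0"
    by (metis map_poly_eq_0_iff_const_dvd)
  then show "[:lin:] dvd a \<or> [:lin:] dvd b"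
    by (simp add: map_poly_eq_0_iff_const_dvd)
qed

end

lemma dvd_R_of_if_const_dvd_disc_res:
  fixes F :: poly_yxts
  assumes "prime_elem [:c:]" and "[:c:] dvd disc_res F" and "R_of F \<noteq> 0"
  shows "c dvd R_of F"
proof -
  have "degree F \<noteq> 0" using assms(3) by (auto simp: R_of_def M_of_def Let_def)
  then have M: "M_of F = sqfree_part (disc_res F)" by (simp add: M_of_def)
  have deg_M: "degree (M_of F) \<noteq> 0" using assms(3) by (auto simp: R_of_def Let_def)
  have R: "R_of F = resultant (M_of F) (pderiv (M_of F))"
    using deg_M by (simp add: R_of_def disc_res_def Let_def)
  have "disc_res F \<noteq> 0" using deg_M by (auto simp: M sqfree_part_def)
  then have "[:c:] dvd M_of F"
    unfolding M using assms(1,2) by (rule prime_elem_dvd_sqfree_part[rotated 2])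
  then show ?thesis unfolding R using deg_M by (auto intro: const_dvd_imp_dvd_resultant_pderiv)
qed

lemma sqfree_xy_if_disc_res_nonzero:
  fixes F :: "real poly poly poly"
  assumes "F \<noteq> 0" and "disc_res F \<noteq> 0" and "degree (lead_coeff F) = 0"
  shows "sqfree_xy F"
  unfolding sqfree_xy_def
proof (intro allI impI)
  fix G assume square: "G * G dvd F"
  have deg_G: "degree G = 0"
    using resultant_pderiv_eq_0_if_square_dvd[OF square assms(1)] assms(2)
    by (auto simp: disc_res_def)
  define g where "g = coeff G 0"
  have "G = [:g:]" using degree_0_id[OF deg_G] by (simp add: g_def)
  then have "[:g * g:] dvd F" using square by simp
  then have "g * g dvd lead_coeff F" by (simp add: const_poly_dvd_iff)
  then have "degree (g * g) = 0" and "g \<noteq> 0"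
    using dvd_imp_degree_le[of "g * g" "lead_coeff F"] assms(1,3) by auto
  then show "degree G = 0 \<and> degree (coeff G 0) = 0"
    using deg_G by (simp add: g_def degree_mult_eq)
qed

lemma specialization_properties:
  fixes F :: poly_yxts and h :: "real poly poly \<Rightarrow> real poly"
  assumes "principal_kernel_hom h lin"
    and lc: "degree (lc_y F) = 0" and R0: "R_of F \<noteq> 0" and not_dvd: "\<not> lin dvd R_of F"
  shows "h (coeff (lc_y F) 0) \<noteq> 0
    \<and> degree (map_poly (map_poly h) F) = degree F
    \<and> map_poly h (disc_res F)
        = resultant (map_poly (map_poly h) F) (map_poly (map_poly h) (pderiv F))
    \<and> sqfree_xy (map_poly (map_poly h) F)"
proof -
  note kernel = principal_kernel_hom.map_poly_eq_0_iff_const_dvd[OF assms(1)]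
  interpret H: map_poly_idom_hom h
    using assms(1) by (simp add: map_poly_idom_hom_def principal_kernel_hom_def)
  have lc_const: "map_poly h (lc_y F) = [:h (coeff (lc_y F) 0):]"
    by (subst degree_0_id[OF lc, symmetric]) (simp add: H.base.map_poly_pCons_hom)
  have disc: "map_poly h (disc_res F) \<noteq> 0"
    using dvd_R_of_if_const_dvd_disc_res[OF principal_kernel_hom.prime_elem_const[OF assms(1)]
        _ R0] not_dvd
    by (auto simp: kernel)
  have deg_F: "degree F \<noteq> 0" using R0 by (auto simp: R_of_def M_of_def Let_def)
  then have "lc_y F dvd disc_res F"
    unfolding disc_res_def by (intro lead_coeff_dvd_resultant_pderiv) auto
  then have lc_spec: "map_poly h (lc_y F) \<noteq> 0"
    using disc kernel dvd_trans by metis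
  note spec = disc_res_map_poly[OF H.idom_hom_axioms lc_spec]
  have "lead_coeff (map_poly (map_poly h) F) = map_poly h (lc_y F)"
    using spec(1) by (simp add: coeff_map_poly)
  moreover have "degree (map_poly h (lc_y F)) = 0" by (simp add: lc_const)
  ultimately have "sqfree_xy (map_poly (map_poly h) F)"
    using deg_F lc_spec disc spec
    by (intro sqfree_xy_if_disc_res_nonzero) (auto simp: disc_res_def H.map_poly_pderiv)
  moreover have "h (coeff (lc_y F) 0) \<noteq> 0"
    using lc_spec by (simp add: lc_const)
  ultimately show ?thesis using spec by simp
qed

lemma principal_kernel_hom_spec_t: "principal_kernel_hom (spec_t_ts t0) (t_lin t0)"
proof -
  interpret map_poly_idom_hom "\<lambda>c::real poly. poly c t0" ..
  have eq: "spec_t_ts t0 = map_poly (\<lambda>c. poly c t0)" by (rule ext) (simp add: spec_t_ts_def)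
  have "spec_t_ts t0 p = 0 \<longleftrightarrow> t_lin t0 dvd p" for p
    by (simp add: eq poly_eq_iff t_lin_def const_poly_dvd_iff poly_eq_0_iff_dvd)
  then show ?thesis
    using idom_hom_axioms
    by (simp add: principal_kernel_hom_def principal_kernel_hom_axioms_def eq t_lin_def)
qed

lemma principal_kernel_hom_spec_s: "principal_kernel_hom (spec_s_ts s0) (s_lin s0)"
proof -
  have eq: "spec_s_ts s0 = (\<lambda>p. poly p [:s0:])" by (rule ext) (simp add: spec_s_ts_def)
  have "spec_s_ts s0 p = 0 \<longleftrightarrow> s_lin s0 dvd p" for p
    by (simp add: eq s_lin_def poly_eq_0_iff_dvd)
  then show ?thesis
    using poly_hom.idom_hom_axioms
    by (simp add: principal_kernel_hom_def principal_kernel_hom_axioms_def eq s_lin_def)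
qed

lemma spec_t_xts_eq: "spec_t_xts t0 = map_poly (spec_t_ts t0)"
  by (rule ext) (simp add: spec_t_xts_def)

lemma spec_t_eq: "spec_t t0 = map_poly (map_poly (spec_t_ts t0))"
  by (rule ext) (simp add: spec_t_def spec_t_xts_eq)

lemma spec_s_xts_eq: "spec_s_xts s0 = map_poly (spec_s_ts s0)"
  by (rule ext) (simp add: spec_s_xts_def)

lemma spec_s_eq: "spec_s s0 = map_poly (map_poly (spec_s_ts s0))"
  by (rule ext) (simp add: spec_s_def spec_s_xts_eq)

theorem lemma10:
  fixes F :: poly_yxts
  assumes sqf: "squarefree F"
    and nots: "no_ts_factor F"
    and lc: "degree (lc_y F) = 0"
    and R0: "R_of F \<noteq> 0"
  shows "(\<forall>t0::real. \<not> t_lin t0 dvd R_of F \<longrightarrow>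
            spec_t_ts t0 (coeff (lc_y F) 0) \<noteq> 0
          \<and> degree (spec_t t0 F) = degree F
          \<and> spec_t_xts t0 (disc_res F) = resultant (spec_t t0 F) (spec_t t0 (pderiv F))
          \<and> sqfree_xy (spec_t t0 F))
       \<and> (\<forall>s0::real. \<not> s_lin s0 dvd R_of F \<longrightarrow>
            spec_s_ts s0 (coeff (lc_y F) 0) \<noteq> 0
          \<and> degree (spec_s s0 F) = degree F
          \<and> spec_s_xts s0 (disc_res F) = resultant (spec_s s0 F) (spec_s s0 (pderiv F))
          \<and> sqfree_xy (spec_s s0 F))"
  using specialization_properties[OF principal_kernel_hom_spec_t lc R0]
    specialization_properties[OF principal_kernel_hom_spec_s lc R0]
  by (simp add: spec_t_eq spec_t_xts_eq spec_s_eq spec_s_xts_eq)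

end
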